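(* For every integer $k\ge 3$ there exist an integer $i$ with $1\le i<k$, a real $t\in[0,1]$ with $i(1-t)=k/2$, and a function $m(v)=\Theta(v^t)$ such that the $k$-uniform hypergraph properties $f_v$ defined by "$f_v(H)=1$ iff there is $S\subseteq[v]$, $|S|=m(v)$, such that every $k$-subset of $S$ is an edge of $H$ and every edge $E$ of $H$ with $E\not\subseteq S$ satisfies $|E\cap S|<i$" satisfy $s(f_v)=\Theta(v^{k/2})$. In particular, for every $k\ge 2$ there is a $k$-uniform hypergraph property with $s(f)=\Theta(v^{k/2})=\Theta(\sqrt{n})$, $n=\binom vk$.
   Context: A $k$-uniform hypergraph on $[v]$ is identified with a string in $\{0,1\}^{\binom vk}$. A $k$-uniform hypergraph property is a Boolean function on such strings invariant under all permutations of $[v]$. $s(f,x)$ is the number of coordinates whose flip changes $f(x)$, and $s(f)=\max_x s(f,x)$. Asymptotics are as $v\to\infty$ with $k$ fixed. *)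

theory Defs
  imports Complex_Main "HOL-Library.Landau_Symbols"
begin

text \<open>Vertex set [v] is rendered as {0..<v}. A k-uniform hypergraph on [v] is a set of
  k-subsets of {0..<v}, i.e. a subset of ksets v k (equivalently a 0/1 string indexed by ksets v k).\<close>

definition ksets :: "nat \<Rightarrow> nat \<Rightarrow> nat set set" where
  "ksets v k = {E. E \<subseteq> {0..<v} \<and> card E = k}"

definition hypergraph_property :: "nat \<Rightarrow> nat \<Rightarrow> (nat set set \<Rightarrow> bool) \<Rightarrow> bool" where
  "hypergraph_property v k f \<longleftrightarrow>
     (\<forall>\<pi>. bij_betw \<pi> {0..<v} {0..<v} \<longrightarrow>
        (\<forall>H. H \<subseteq> ksets v k \<longrightarrow> f ((\<lambda>E. \<pi> ` E) ` H) = f H))"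

definition flip :: "nat set set \<Rightarrow> nat set \<Rightarrow> nat set set" where
  "flip H E = (if E \<in> H then H - {E} else insert E H)"

definition sens_at :: "nat \<Rightarrow> nat \<Rightarrow> (nat set set \<Rightarrow> bool) \<Rightarrow> nat set set \<Rightarrow> nat" where
  "sens_at v k f H = card {E \<in> ksets v k. f (flip H E) \<noteq> f H}"

definition sens :: "nat \<Rightarrow> nat \<Rightarrow> (nat set set \<Rightarrow> bool) \<Rightarrow> nat" where
  "sens v k f = Max (sens_at v k f ` Pow (ksets v k))"

definition clique_prop :: "nat \<Rightarrow> nat \<Rightarrow> nat \<Rightarrow> nat \<Rightarrow> nat set set \<Rightarrow> bool" where
  "clique_prop k i m v H \<longleftrightarrow>
     (\<exists>S. S \<subseteq> {0..<v} \<and> card S = m \<and>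
          (\<forall>E \<in> ksets v k. E \<subseteq> S \<longrightarrow> E \<in> H) \<and>
          (\<forall>E \<in> H. \<not> E \<subseteq> S \<longrightarrow> card (E \<inter> S) < i))"

end

theory Submission
  imports Defs "HOL-Library.FuncSet"
begin

text \<open>
  Call S a witness for H when it certifies clique_prop. Lower bound: in the clique on an m-set S0,
  adding any further edge forces every witness to be S0, so each k-set meeting S0 in exactly i
  points is sensitive; there are C(m,i) C(v-m,k-i) of them. Upper bound: if H has a witness S, only
  edges meeting S in at least i points are sensitive, at most C(m,i) C(v,k-i) of them. If H has
  none, every sensitive edge E gives a witness W(E) of H with E flipped, and the witnesses of
  distinct sensitive edges share fewer than i points; so their i-subsets are pairwise disjoint and
  there are at most C(v,i) / C(m,i) sensitive edges. For m of order v^t with i(1-t) = k/2 all three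
  quantities are of order v^(k/2).
\<close>

section \<open>Witnesses and permutation invariance\<close>

definition clique_witness :: "nat \<Rightarrow> nat \<Rightarrow> nat \<Rightarrow> nat \<Rightarrow> nat set set \<Rightarrow> nat set \<Rightarrow> bool" where
  "clique_witness k i m v H S \<longleftrightarrow> S \<subseteq> {0..<v} \<and> card S = m \<and>
     (\<forall>E \<in> ksets v k. E \<subseteq> S \<longrightarrow> E \<in> H) \<and>
     (\<forall>E \<in> H. \<not> E \<subseteq> S \<longrightarrow> card (E \<inter> S) < i)"

lemma clique_prop_iff_witness: "clique_prop k i m v H \<longleftrightarrow> (\<exists>S. clique_witness k i m v H S)"
  unfolding clique_prop_def clique_witness_def by blast

lemma mem_ksets: "E \<in> ksets v k \<longleftrightarrow> E \<subseteq> {0..<v} \<and> card E = k"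
  by (simp add: ksets_def)

lemma finite_ksets: "finite (ksets v k)"
  unfolding ksets_def by (rule finite_subset[of _ "Pow {0..<v}"]) auto

lemma finite_ksets_member: "E \<in> ksets v k \<Longrightarrow> finite E"
  by (auto simp: mem_ksets intro: finite_subset)

lemma mem_flip_self [simp]: "E \<in> flip H E \<longleftrightarrow> E \<notin> H"
  by (simp add: flip_def)

lemma mem_flip_other [simp]: "G \<noteq> E \<Longrightarrow> G \<in> flip H E \<longleftrightarrow> G \<in> H"
  by (auto simp: flip_def)

lemma flip_flip [simp]: "flip (flip H E) E = H"
  by (auto simp: flip_def)

lemma sens_at_le_sens: "H \<subseteq> ksets v k \<Longrightarrow> sens_at v k f H \<le> sens v k f"
  unfolding sens_def by (rule Max_ge) (auto simp: finite_ksets)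

lemma sens_attained: obtains H where "H \<subseteq> ksets v k" "sens v k f = sens_at v k f H"
proof -
  have "sens v k f \<in> sens_at v k f ` Pow (ksets v k)"
    unfolding sens_def by (rule Max_in) (auto simp: finite_ksets)
  thus ?thesis using that by auto
qed

lemma hypergraph_propertyI:
  assumes "\<And>\<pi> H. bij_betw \<pi> {0..<v} {0..<v} \<Longrightarrow> H \<subseteq> ksets v k \<Longrightarrow> f H \<Longrightarrow> f ((\<lambda>E. \<pi> ` E) ` H)"
  shows "hypergraph_property v k f"
  unfolding hypergraph_property_def
proof (intro allI impI iffI)
  fix \<pi> H assume bij: "bij_betw \<pi> {0..<v} {0..<v}" and H: "H \<subseteq> ksets v k"
  define \<sigma> where "\<sigma> = inv_into {0..<v} \<pi>"
  have inj: "inj_on \<pi> {0..<v}" using bij by (rule bij_betw_imp_inj_on)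
  have "bij_betw \<sigma> {0..<v} {0..<v}" unfolding \<sigma>_def by (rule bij_betw_inv_into[OF bij])
  moreover have \<pi>H: "(\<lambda>E. \<pi> ` E) ` H \<subseteq> ksets v k"
    using H inj bij_betw_imp_surj_on[OF bij]
    by (auto simp: mem_ksets card_image inj_on_subset subset_iff)
  moreover have "(\<lambda>E. \<sigma> ` E) ` (\<lambda>E. \<pi> ` E) ` H = H"
  proof -
    have "\<sigma> ` \<pi> ` E = E" if "E \<in> H" for E
      unfolding \<sigma>_def using that H inj by (intro inv_into_image_cancel) (auto simp: ksets_def)
    thus ?thesis by (simp add: image_image)
  qed
  moreover assume "f ((\<lambda>E. \<pi> ` E) ` H)"
  ultimately show "f H" using assms by metis
qed (use assms in blast)

lemma clique_witness_image:
  assumes bij: "bij_betw \<pi> {0..<v} {0..<v}" and H: "H \<subseteq> ksets v k"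
    and S: "clique_witness k i m v H S"
  shows "clique_witness k i m v ((\<lambda>E. \<pi> ` E) ` H) (\<pi> ` S)"
proof -
  have inj: "inj_on \<pi> {0..<v}" and im: "\<pi> ` {0..<v} = {0..<v}"
    using bij by (auto simp: bij_betw_def)
  have Sv: "S \<subseteq> {0..<v}" and cS: "card S = m"
    and clique: "\<forall>E \<in> ksets v k. E \<subseteq> S \<longrightarrow> E \<in> H"
    and sparse: "\<forall>E \<in> H. \<not> E \<subseteq> S \<longrightarrow> card (E \<inter> S) < i"
    using S unfolding clique_witness_def by auto
  have "\<pi> ` S \<subseteq> {0..<v}" using Sv im by blast
  moreover have "card (\<pi> ` S) = m" using Sv cS inj by (metis card_image inj_on_subset)
  moreover have "E \<in> (\<lambda>E. \<pi> ` E) ` H" if E: "E \<in> ksets v k" "E \<subseteq> \<pi> ` S" for E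
  proof -
    define E0 where "E0 = inv_into {0..<v} \<pi> ` E"
    have E0S: "E0 \<subseteq> S" unfolding E0_def using E(2) Sv inj by (auto simp: inv_into_f_f subset_iff)
    have "card E0 = k" unfolding E0_def using E Sv
      by (subst card_image) (auto simp: mem_ksets intro!: inj_on_inv_into)
    hence "E0 \<in> H" using clique E0S Sv by (auto simp: mem_ksets)
    moreover have "\<pi> ` E0 = E" unfolding E0_def using E by (intro image_inv_into_cancel[OF im]) (auto simp: mem_ksets)
    ultimately show ?thesis by blast
  qed
  moreover have "card (G \<inter> \<pi> ` S) < i" if G: "G \<in> (\<lambda>E. \<pi> ` E) ` H" "\<not> G \<subseteq> \<pi> ` S" for G
  proof -
    obtain E where E: "E \<in> H" "G = \<pi> ` E" using G(1) by blast
    have Ev: "E \<subseteq> {0..<v}" using E(1) H by (auto simp: ksets_def)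
    have "G \<inter> \<pi> ` S = \<pi> ` (E \<inter> S)" using E(2) inj Ev Sv by (simp add: inj_on_image_Int)
    moreover have "card (\<pi> ` (E \<inter> S)) = card (E \<inter> S)"
      using inj Ev by (metis card_image inj_on_subset le_infI1)
    moreover have "card (E \<inter> S) < i" using sparse E G(2) by blast
    ultimately show ?thesis by simp
  qed
  ultimately show ?thesis unfolding clique_witness_def by blast
qed

lemma hypergraph_property_clique_prop: "hypergraph_property v k (clique_prop k i m v)"
  by (rule hypergraph_propertyI) (meson clique_prop_iff_witness clique_witness_image)

section \<open>Counting k-sets by their intersection with a set\<close>

lemma card_ksets_Int_eq:
  assumes Sv: "S \<subseteq> {0..<v}" and cS: "card S = m" and ik: "i \<le> k"
  shows "card {E \<in> ksets v k. card (E \<inter> S) = i} = (m choose i) * ((v - m) choose (k - i))"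
proof -
  have finS: "finite S" using Sv by (rule finite_subset) simp
  define As where "As = {A. A \<subseteq> S \<and> card A = i}"
  define Bs where "Bs = {B. B \<subseteq> {0..<v} - S \<and> card B = k - i}"
  have "bij_betw (\<lambda>(A, B). A \<union> B) (As \<times> Bs) {E \<in> ksets v k. card (E \<inter> S) = i}"
  proof (rule bij_betwI[where g = "\<lambda>E. (E \<inter> S, E - S)"])
    show "(\<lambda>(A, B). A \<union> B) \<in> As \<times> Bs \<rightarrow> {E \<in> ksets v k. card (E \<inter> S) = i}"
    proof clarify
      fix A B assume "A \<in> As" "B \<in> Bs"
      hence A: "A \<subseteq> S" "card A = i" and B: "B \<subseteq> {0..<v} - S" "card B = k - i"
        unfolding As_def Bs_def by auto
      have "finite A" "finite B" using A(1) B(1) finS by (auto intro: finite_subset)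
      hence "card (A \<union> B) = k" using A B ik by (subst card_Un_disjoint) auto
      moreover have "(A \<union> B) \<inter> S = A" using A B by auto
      ultimately show "A \<union> B \<in> ksets v k \<and> card ((A \<union> B) \<inter> S) = i"
        using A B Sv by (auto simp: mem_ksets)
    qed
    show "(\<lambda>E. (E \<inter> S, E - S)) \<in> {E \<in> ksets v k. card (E \<inter> S) = i} \<rightarrow> As \<times> Bs"
    proof
      fix E assume "E \<in> {E \<in> ksets v k. card (E \<inter> S) = i}"
      hence E: "E \<in> ksets v k" "card (E \<inter> S) = i" by auto
      have "card (E - S) = k - i"
        using E finite_ksets_member[OF E(1)] by (simp add: mem_ksets card_Diff_subset_Int)
      thus "(E \<inter> S, E - S) \<in> As \<times> Bs" using E unfolding As_def Bs_def by (auto simp: mem_ksets)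
    qed
  qed (auto simp: As_def Bs_def)
  hence "card {E \<in> ksets v k. card (E \<inter> S) = i} = card (As \<times> Bs)"
    by (simp add: bij_betw_same_card)
  also have "\<dots> = card As * card Bs" by (rule card_cartesian_product)
  also have "card As = m choose i" unfolding As_def using n_subsets[OF finS] cS by simp
  also have "card Bs = (v - m) choose (k - i)"
    unfolding Bs_def using n_subsets[of "{0..<v} - S"] Sv cS finS by (simp add: card_Diff_subset)
  finally show ?thesis .
qed

lemma card_ksets_Int_ge_le:
  assumes Sv: "S \<subseteq> {0..<v}" and cS: "card S = m"
  shows "card {E \<in> ksets v k. i \<le> card (E \<inter> S)} \<le> (m choose i) * (v choose (k - i))"
proof -
  have finS: "finite S" using Sv by (rule finite_subset) simp
  define As where "As = {A. A \<subseteq> S \<and> card A = i}"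
  define Bs where "Bs = {B. B \<subseteq> {0..<v} \<and> card B = k - i}"
  have fin: "finite (As \<times> Bs)" unfolding As_def Bs_def using finS by simp
  have "{E \<in> ksets v k. i \<le> card (E \<inter> S)} \<subseteq> (\<lambda>(A, B). A \<union> B) ` (As \<times> Bs)"
  proof clarify
    fix E assume E: "E \<in> ksets v k" "i \<le> card (E \<inter> S)"
    obtain A where A: "A \<subseteq> E \<inter> S" "card A = i" using obtain_subset_with_card_n[OF E(2)] by blast
    have "finite A" using A(1) finite_ksets_member[OF E(1)] by (auto intro: finite_subset)
    hence "card (E - A) = k - i" using A E by (simp add: mem_ksets card_Diff_subset)
    hence "A \<in> As" "E - A \<in> Bs" using A E unfolding As_def Bs_def by (auto simp: mem_ksets)
    moreover have "E = A \<union> (E - A)" using A by auto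
    ultimately show "E \<in> (\<lambda>(A, B). A \<union> B) ` (As \<times> Bs)"
      by (intro rev_image_eqI[of "(A, E - A)"]) auto
  qed
  hence "card {E \<in> ksets v k. i \<le> card (E \<inter> S)} \<le> card ((\<lambda>(A, B). A \<union> B) ` (As \<times> Bs))"
    using fin by (intro card_mono) auto
  also have "\<dots> \<le> card (As \<times> Bs)" using fin by (rule card_image_le)
  also have "\<dots> = card As * card Bs" by (rule card_cartesian_product)
  also have "card As = m choose i" unfolding As_def using n_subsets[OF finS] cS by simp
  also have "card Bs = v choose (k - i)" unfolding Bs_def using n_subsets[of "{0..<v}"] by simp
  finally show ?thesis .
qed

section \<open>Bounds on the sensitivity\<close>

lemma clique_witness_clique:
  "m \<le> v \<Longrightarrow> clique_witness k i m v (ksets m k) {0..<m}"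
  unfolding clique_witness_def by (auto simp: mem_ksets)

lemma clique_witness_unique:
  assumes S: "clique_witness k i m v H S"
    and H: "\<forall>G \<in> H. G \<noteq> E \<longrightarrow> G \<subseteq> S0" and cS0: "card S0 = m"
    and E: "E \<in> ksets v k" and k: "2 \<le> k" "k < m"
  shows "S = S0"
proof -
  have Sv: "S \<subseteq> {0..<v}" and cS: "card S = m"
    and clique: "\<forall>G \<in> ksets v k. G \<subseteq> S \<longrightarrow> G \<in> H"
    using S unfolding clique_witness_def by auto
  have finS: "finite S" using Sv by (rule finite_subset) simp
  have "\<not> S \<subseteq> E"
  proof
    assume "S \<subseteq> E"
    hence "card S \<le> card E" by (rule card_mono[OF finite_ksets_member[OF E]])
    thus False using cS k E by (simp add: mem_ksets)
  qed
  then obtain y where y: "y \<in> S" "y \<notin> E" by blast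
  have "S \<subseteq> S0"
  proof
    fix x assume x: "x \<in> S"
    have "card {x, y} \<le> k" using k by (simp add: card_insert_if)
    then obtain G where G: "{x, y} \<subseteq> G" "G \<subseteq> S" "card G = k"
      using exists_subset_between[of "{x, y}" k S] x y k cS finS by auto
    have "G \<in> H" using clique G Sv by (auto simp: mem_ksets)
    moreover have "G \<noteq> E" using G(1) y by auto
    ultimately show "x \<in> S0" using H G(1) by auto
  qed
  moreover have "finite S0" using cS0 k by (intro card_ge_0_finite) auto
  ultimately show ?thesis using cS cS0 by (intro card_subset_eq) auto
qed

lemma sens_clique_prop_ge:
  assumes km: "k < m" and mv: "m \<le> v" and i: "1 \<le> i" "i < k"
  shows "(m choose i) * ((v - m) choose (k - i)) \<le> sens v k (clique_prop k i m v)"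
proof -
  let ?f = "clique_prop k i m v" and ?S0 = "{0..<m}" and ?H0 = "ksets m k"
  have fH0: "?f ?H0" using clique_witness_clique[OF mv] by (auto simp: clique_prop_iff_witness)
  have H0: "?H0 \<subseteq> ksets v k" using mv unfolding ksets_def by auto
  have "\<not> ?f (flip ?H0 E)" if E: "E \<in> ksets v k" "card (E \<inter> ?S0) = i" for E
  proof
    have "\<not> E \<subseteq> ?S0"
    proof
      assume "E \<subseteq> ?S0"
      hence "E \<inter> ?S0 = E" by blast
      thus False using E i by (simp add: mem_ksets)
    qed
    hence flip: "flip ?H0 E = insert E ?H0" by (auto simp: flip_def mem_ksets)
    assume "?f (flip ?H0 E)"
    then obtain S where S: "clique_witness k i m v (insert E ?H0) S"
      by (auto simp: clique_prop_iff_witness flip)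
    have "S = ?S0" using clique_witness_unique[OF S _ _ E(1)] i km by (auto simp: mem_ksets)
    thus False using S \<open>\<not> E \<subseteq> ?S0\<close> E(2) by (auto simp: clique_witness_def)
  qed
  hence "{E \<in> ksets v k. card (E \<inter> ?S0) = i} \<subseteq> {E \<in> ksets v k. ?f (flip ?H0 E) \<noteq> ?f ?H0}"
    using fH0 by auto
  hence "card {E \<in> ksets v k. card (E \<inter> ?S0) = i} \<le> sens_at v k ?f ?H0"
    unfolding sens_at_def by (intro card_mono) (auto simp: finite_ksets)
  also have "\<dots> \<le> sens v k ?f" using H0 by (rule sens_at_le_sens)
  finally show ?thesis using card_ksets_Int_eq[of ?S0 v m i k] mv i by simp
qed

lemma clique_witness_flip:
  assumes S: "clique_witness k i m v H S" and E: "E \<in> ksets v k" "card (E \<inter> S) < i"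
    and ik: "i \<le> k"
  shows "clique_witness k i m v (flip H E) S"
proof -
  have "\<not> E \<subseteq> S"
  proof
    assume "E \<subseteq> S"
    hence "E \<inter> S = E" by blast
    thus False using E ik by (simp add: mem_ksets)
  qed
  thus ?thesis using S E(2) unfolding clique_witness_def
    by (metis (full_types) mem_flip_other mem_flip_self)
qed

lemma sens_at_clique_prop_le:
  assumes "clique_prop k i m v H" and ik: "i \<le> k"
  shows "sens_at v k (clique_prop k i m v) H \<le> (m choose i) * (v choose (k - i))"
proof -
  let ?f = "clique_prop k i m v"
  obtain S where S: "clique_witness k i m v H S" using assms(1) by (auto simp: clique_prop_iff_witness)
  have "i \<le> card (E \<inter> S)" if E: "E \<in> ksets v k" "?f (flip H E) \<noteq> ?f H" for E
    using clique_witness_flip[OF S E(1) _ ik] E(2) assms(1) S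
    by (auto simp: clique_prop_iff_witness)
  hence "sens_at v k ?f H \<le> card {E \<in> ksets v k. i \<le> card (E \<inter> S)}"
    unfolding sens_at_def by (intro card_mono) (auto simp: finite_ksets)
  also have "\<dots> \<le> (m choose i) * (v choose (k - i))"
    using S by (intro card_ksets_Int_ge_le) (auto simp: clique_witness_def)
  finally show ?thesis .
qed

lemma clique_witness_flip_cases:
  assumes nf: "\<not> clique_prop k i m v H" and S: "clique_witness k i m v (flip H E) S"
    and E: "E \<in> ksets v k" and ik: "i \<le> k"
  shows "E \<notin> H \<and> E \<subseteq> S \<or> E \<in> H \<and> \<not> E \<subseteq> S \<and> i \<le> card (E \<inter> S)"
proof -
  have iE: "i \<le> card (E \<inter> S)"
  proof (rule ccontr)
    assume "\<not> i \<le> card (E \<inter> S)"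
    hence "clique_witness k i m v (flip (flip H E) E) S" using clique_witness_flip[OF S E _ ik] by simp
    thus False using nf by (auto simp: clique_prop_iff_witness)
  qed
  show ?thesis
  proof (cases "E \<in> H")
    case True
    hence "\<not> E \<subseteq> S" using S E by (auto simp: clique_witness_def)
    thus ?thesis using True iE by simp
  next
    case False
    hence "E \<subseteq> S" using S iE by (auto simp: clique_witness_def)
    thus ?thesis using False by simp
  qed
qed

definition leaving_ksets :: "nat \<Rightarrow> nat \<Rightarrow> nat set \<Rightarrow> nat set \<Rightarrow> nat set set" where
  "leaving_ksets k i S T = {G. G \<subseteq> T \<and> card G = k \<and> \<not> G \<subseteq> S \<and> i \<le> card (G \<inter> S)}"

text \<open>At least three of these sets are needed, so that one of them differs from two given edges.\<close>

lemma card_le_card_if_inserts_mem: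
  assumes "finite \<G>" and "A \<inter> P = {}" and "\<And>a. a \<in> A \<Longrightarrow> insert a P \<in> \<G>"
  shows "card A \<le> card \<G>"
proof -
  have "inj_on (\<lambda>a. insert a P) A"
  proof (rule inj_onI)
    fix a b assume "a \<in> A" "insert a P = insert b P"
    hence "a \<in> insert b P" "a \<notin> P" using assms(2) by auto
    thus "a = b" by simp
  qed
  hence "card A = card ((\<lambda>a. insert a P) ` A)" by (simp add: card_image)
  also have "\<dots> \<le> card \<G>" using assms(1,3) by (intro card_mono) auto
  finally show ?thesis .
qed

lemma three_le_card_leaving_ksets_outside:
  assumes finT: "finite T" and cT: "card T = m" and D: "3 \<le> card (T - S)"
    and iC: "i \<le> card (T \<inter> S)" and i: "1 \<le> i" "i < k" and km: "k + 3 \<le> m"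
  shows "3 \<le> card (leaving_ksets k i S T)"
proof -
  obtain A where A: "A \<subseteq> T - S" "card A = 3" using obtain_subset_with_card_n[OF D] by blast
  obtain I where I: "I \<subseteq> T \<inter> S" "card I = i" using obtain_subset_with_card_n[OF iC] by blast
  have AT: "A \<subseteq> T" using A(1) by blast
  have "card (T - A) = m - 3"
    using card_Diff_subset[OF finite_subset[OF AT finT] AT] A(2) cT by simp
  hence "k - 1 \<le> card (T - A)" using km by linarith
  moreover have "card I \<le> k - 1" using I(2) i by linarith
  moreover have "I \<subseteq> T - A" using I(1) A(1) by auto
  ultimately have "\<exists>P. I \<subseteq> P \<and> P \<subseteq> T - A \<and> card P = k - 1"
    using finT by (intro exists_subset_between) auto
  then obtain P where P: "I \<subseteq> P" "P \<subseteq> T - A" "card P = k - 1" by blast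
  have "insert a P \<in> leaving_ksets k i S T" if a: "a \<in> A" for a
  proof -
    have finP: "finite P" using P(2) finT by (auto intro: finite_subset)
    moreover have "a \<notin> P" using a P(2) by blast
    ultimately have "card (insert a P) = k" using P(3) i by simp
    moreover have "I \<subseteq> insert a P \<inter> S" using I(1) P(1) by auto
    hence "card I \<le> card (insert a P \<inter> S)" by (intro card_mono) (use finP in auto)
    hence "i \<le> card (insert a P \<inter> S)" using I(2) by simp
    moreover have "insert a P \<subseteq> T" using a A(1) P(2) by blast
    moreover have "\<not> insert a P \<subseteq> S" using a A(1) by blast
    ultimately show ?thesis unfolding leaving_ksets_def by blast
  qed
  moreover have "A \<inter> P = {}" using P(2) by blast
  moreover have "finite (leaving_ksets k i S T)" using finT by (simp add: leaving_ksets_def)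
  ultimately show ?thesis using card_le_card_if_inserts_mem A(2) by metis
qed

lemma three_le_card_leaving_ksets_inside:
  assumes finT: "finite T" and C: "k + 1 \<le> card (T \<inter> S)" and d: "d \<in> T - S"
    and i: "1 \<le> i" "i < k"
  shows "3 \<le> card (leaving_ksets k i S T)"
proof -
  have "3 \<le> card (T \<inter> S)" using C i by linarith
  then obtain A where A: "A \<subseteq> T \<inter> S" "card A = 3" by (rule obtain_subset_with_card_n)
  have finC: "finite (T \<inter> S)" using finT by simp
  have "card (T \<inter> S - A) = card (T \<inter> S) - 3"
    using card_Diff_subset[OF finite_subset[OF A(1) finC] A(1)] A(2) by simp
  hence "k - 2 \<le> card (T \<inter> S - A)" using C by linarith
  then obtain B where B: "B \<subseteq> T \<inter> S - A" "card B = k - 2" by (rule obtain_subset_with_card_n)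
  have finB: "finite B" using B(1) finC by (auto intro: finite_subset)
  have dB: "d \<notin> B" using d B(1) by blast
  have "insert a (insert d B) \<in> leaving_ksets k i S T" if a: "a \<in> A" for a
  proof -
    have aB: "a \<notin> B" "a \<noteq> d" using a A(1) B(1) d by auto
    hence "card (insert a (insert d B)) = k" using dB B(2) finB i by simp
    moreover have "insert a B \<subseteq> insert a (insert d B) \<inter> S" using a A(1) B(1) by blast
    hence "card (insert a B) \<le> card (insert a (insert d B) \<inter> S)"
      by (intro card_mono) (use finB in auto)
    hence "i \<le> card (insert a (insert d B) \<inter> S)" using aB B(2) finB i by simp
    moreover have "insert a (insert d B) \<subseteq> T" using a A(1) B(1) d by blast
    moreover have "\<not> insert a (insert d B) \<subseteq> S" using d by blast
    ultimately show ?thesis unfolding leaving_ksets_def by blast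
  qed
  moreover have "A \<inter> insert d B = {}" using A(1) B(1) d by blast
  moreover have "finite (leaving_ksets k i S T)" using finT by (simp add: leaving_ksets_def)
  ultimately show ?thesis using card_le_card_if_inserts_mem A(2) by metis
qed

lemma three_le_card_leaving_ksets:
  assumes finS: "finite S" and finT: "finite T" and cS: "card S = m" and cT: "card T = m"
    and ne: "S \<noteq> T" and iC: "i \<le> card (S \<inter> T)" and i: "1 \<le> i" "i < k" and km: "k + 3 \<le> m"
  shows "3 \<le> card (leaving_ksets k i S T)"
proof (cases "3 \<le> card (T - S)")
  case True
  moreover have "i \<le> card (T \<inter> S)" using iC by (simp add: Int_commute)
  ultimately show ?thesis using three_le_card_leaving_ksets_outside finT cT i km by blast
next
  case False
  have "card (T \<inter> S) + card (T - S) = m" using card_Int_Diff[OF finT, of S] cT by simp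
  hence "k + 1 \<le> card (T \<inter> S)" using False km by linarith
  moreover obtain d where "d \<in> T - S" using ne card_subset_eq[OF finS, of T] cS cT by blast
  ultimately show ?thesis using three_le_card_leaving_ksets_inside finT i by blast
qed

lemma clique_witnesses_flip_Int_less:
  assumes nf: "\<not> clique_prop k i m v H" and E: "E \<in> ksets v k" and F: "F \<in> ksets v k" "E \<noteq> F"
    and S: "clique_witness k i m v (flip H E) S" and T: "clique_witness k i m v (flip H F) T"
    and i: "1 \<le> i" "i < k" and km: "k + 3 \<le> m"
  shows "card (S \<inter> T) < i"
proof (rule ccontr)
  assume "\<not> card (S \<inter> T) < i"
  hence iST: "i \<le> card (S \<inter> T)" by simp
  have Tv: "T \<subseteq> {0..<v}" and cT: "card T = m"
    and cliqueT: "\<forall>G \<in> ksets v k. G \<subseteq> T \<longrightarrow> G \<in> flip H F"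
    and sparseS: "\<forall>G \<in> flip H E. \<not> G \<subseteq> S \<longrightarrow> card (G \<inter> S) < i"
    and sparseT: "\<forall>G \<in> flip H F. \<not> G \<subseteq> T \<longrightarrow> card (G \<inter> T) < i"
    using S T unfolding clique_witness_def by auto
  show False
  proof (cases "S = T")
    case True
    have "i \<le> k" using i by simp
    from clique_witness_flip_cases[OF nf S E this] show False
    proof
      assume "E \<notin> H \<and> E \<subseteq> S"
      moreover have "E \<in> flip H F" using calculation cliqueT E True by blast
      ultimately show False using F(2) by simp
    next
      assume "E \<in> H \<and> \<not> E \<subseteq> S \<and> i \<le> card (E \<inter> S)"
      moreover have "E \<in> flip H F" using calculation F(2) by simp
      ultimately show False using sparseT True by auto
    qed
  next
    case False
    have Sv: "S \<subseteq> {0..<v}" and cS: "card S = m" using S unfolding clique_witness_def by auto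
    have fin: "finite S" "finite T" using Sv Tv by (auto intro: finite_subset)
    have "\<not> leaving_ksets k i S T \<subseteq> {E, F}"
    proof
      assume "leaving_ksets k i S T \<subseteq> {E, F}"
      hence "card (leaving_ksets k i S T) \<le> card {E, F}" by (intro card_mono) auto
      also have "\<dots> \<le> 2" by (simp add: card_insert_if)
      finally show False using three_le_card_leaving_ksets[OF fin cS cT False iST i km] by simp
    qed
    then obtain G where G: "G \<subseteq> T" "card G = k" "\<not> G \<subseteq> S" "i \<le> card (G \<inter> S)"
      and GEF: "G \<noteq> E" "G \<noteq> F" unfolding leaving_ksets_def by blast
    have "G \<in> ksets v k" using G(1,2) Tv by (auto simp: mem_ksets)
    hence "G \<in> flip H F" using cliqueT G(1) by blast
    hence "G \<in> flip H E" using GEF by simp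
    thus False using sparseS G(3,4) by auto
  qed
qed

lemma card_mult_choose_le_choose_of_Int_less:
  assumes V: "finite V" and W: "\<And>z. z \<in> Z \<Longrightarrow> W z \<subseteq> V \<and> card (W z) = m"
    and small: "\<And>y z. y \<in> Z \<Longrightarrow> z \<in> Z \<Longrightarrow> y \<noteq> z \<Longrightarrow> card (W y \<inter> W z) < i"
  shows "card Z * (m choose i) \<le> card V choose i"
proof (cases "finite Z")
  case True
  define Q where "Q z = {A. A \<subseteq> W z \<and> card A = i}" for z
  have finW: "finite (W z)" if "z \<in> Z" for z using W[OF that] V by (auto intro: finite_subset)
  have cQ: "card (Q z) = m choose i" if "z \<in> Z" for z
    unfolding Q_def using n_subsets[OF finW[OF that]] W[OF that] by simp
  have "Q y \<inter> Q z = {}" if yz: "y \<in> Z" "z \<in> Z" "y \<noteq> z" for y z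
  proof (rule ccontr)
    assume "Q y \<inter> Q z \<noteq> {}"
    then obtain A where "A \<subseteq> W y \<inter> W z" "card A = i" unfolding Q_def by auto
    hence "i \<le> card (W y \<inter> W z)" using finW[OF yz(1)] by (metis card_mono finite_Int)
    thus False using small[OF yz] by simp
  qed
  hence "card (\<Union>(Q ` Z)) = (\<Sum>z\<in>Z. card (Q z))"
    using True finW by (intro card_UN_disjoint) (auto simp: Q_def)
  also have "\<dots> = card Z * (m choose i)" using cQ by simp
  finally have "card Z * (m choose i) = card (\<Union>(Q ` Z))" ..
  also have "\<dots> \<le> card {A. A \<subseteq> V \<and> card A = i}"
  proof (rule card_mono)
    show "\<Union>(Q ` Z) \<subseteq> {A. A \<subseteq> V \<and> card A = i}" unfolding Q_def using W by blast
  qed (use V in simp)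
  also have "\<dots> = card V choose i" using n_subsets[OF V] .
  finally show ?thesis .
qed simp

lemma sens_at_not_clique_prop_le:
  assumes nf: "\<not> clique_prop k i m v H" and i: "1 \<le> i" "i < k" and km: "k + 3 \<le> m"
  shows "sens_at v k (clique_prop k i m v) H * (m choose i) \<le> v choose i"
proof -
  define Z where "Z = {E \<in> ksets v k. clique_prop k i m v (flip H E) \<noteq> clique_prop k i m v H}"
  have "\<forall>E \<in> Z. \<exists>S. clique_witness k i m v (flip H E) S"
    using nf by (auto simp: Z_def clique_prop_iff_witness)
  then obtain W where W: "\<And>E. E \<in> Z \<Longrightarrow> clique_witness k i m v (flip H E) (W E)" by metis
  have Z: "Z \<subseteq> ksets v k" unfolding Z_def by blast
  have "card Z * (m choose i) \<le> card {0..<v} choose i"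
  proof (rule card_mult_choose_le_choose_of_Int_less)
    show "W E \<subseteq> {0..<v} \<and> card (W E) = m" if "E \<in> Z" for E
      using W[OF that] by (auto simp: clique_witness_def)
    show "card (W E \<inter> W F) < i" if "E \<in> Z" "F \<in> Z" "E \<noteq> F" for E F
      using clique_witnesses_flip_Int_less[OF nf _ _ _ W W] that Z i km by blast
  qed simp
  thus ?thesis by (simp add: sens_at_def Z_def)
qed

lemma sens_clique_prop_le:
  assumes i: "1 \<le> i" "i < k" and km: "k + 3 \<le> m"
  shows "real (sens v k (clique_prop k i m v))
           \<le> real ((m choose i) * (v choose (k - i))) + real (v choose i) / real (m choose i)"
proof -
  let ?f = "clique_prop k i m v"
  obtain H where H: "sens v k ?f = sens_at v k ?f H" by (metis sens_attained)
  have pos: "0 < real (m choose i)" using i km by simp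
  show ?thesis
  proof (cases "?f H")
    case True
    hence "real (sens_at v k ?f H) \<le> real ((m choose i) * (v choose (k - i)))"
      using i by (simp only: of_nat_le_iff) (intro sens_at_clique_prop_le, auto)
    moreover have "0 \<le> real (v choose i) / real (m choose i)" by simp
    ultimately show ?thesis using H by linarith
  next
    case False
    have "real (sens_at v k ?f H) * real (m choose i) \<le> real (v choose i)"
      using sens_at_not_clique_prop_le[OF False i km] by (metis of_nat_le_iff of_nat_mult)
    hence "real (sens_at v k ?f H) \<le> real (v choose i) / real (m choose i)"
      using pos by (simp add: pos_le_divide_eq)
    thus ?thesis using H by (simp add: add_increasing)
  qed
qed

section \<open>Asymptotics\<close>

lemma bigtheta_power: "f \<in> \<Theta>[F](g) \<Longrightarrow> (\<lambda>x. f x ^ n) \<in> \<Theta>[F](\<lambda>x. g x ^ n)"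
  by (auto simp: bigtheta_def intro: landau_o.big_power landau_omega.big_power)

lemma bigtheta_binomial:
  fixes f :: "'a \<Rightarrow> nat"
  assumes "eventually (\<lambda>x. r \<le> f x) F"
  shows "(\<lambda>x. real (f x choose r)) \<in> \<Theta>[F](\<lambda>x. real (f x) ^ r)"
proof
  from assms have "eventually (\<lambda>x. real (f x choose r) \<le> real (f x) ^ r) F"
    by eventually_elim (metis binomial_le_pow of_nat_le_iff of_nat_power)
  thus "(\<lambda>x. real (f x choose r)) \<in> O[F](\<lambda>x. real (f x) ^ r)"
    by (intro landau_o.big_mono) (auto elim!: eventually_mono)
  from assms have "eventually (\<lambda>x. inverse (real r ^ r) * real (f x) ^ r \<le> real (f x choose r)) F"
    by eventually_elim (metis binomial_ge_n_over_k_pow_k power_divide divide_inverse_commute)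
  thus "(\<lambda>x. real (f x choose r)) \<in> \<Omega>[F](\<lambda>x. real (f x) ^ r)"
    by (intro landau_omega.bigI[of "inverse (real r ^ r)"]) (auto elim!: eventually_mono)
qed

lemma max_nat_floor_powr_bigtheta:
  assumes t: "0 \<le> t"
  shows "(\<lambda>v. real (max c (nat \<lfloor>real v powr t\<rfloor>))) \<in> \<Theta>(\<lambda>v. real v powr t)"
proof -
  have bounds: "real v powr t / 2 \<le> real (max c (nat \<lfloor>real v powr t\<rfloor>)) \<and>
      real (max c (nat \<lfloor>real v powr t\<rfloor>)) \<le> (real c + 1) * real v powr t" if v: "1 \<le> v" for v :: nat
  proof -
    define p where "p = real v powr t"
    have p: "1 \<le> p" unfolding p_def using v t by (intro ge_one_powr_ge_zero) auto
    have fl: "real (nat \<lfloor>p\<rfloor>) = of_int \<lfloor>p\<rfloor>" "(1::real) \<le> of_int \<lfloor>p\<rfloor>"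
      using p by (simp_all add: le_floor_iff)
    have "p - 1 < of_int \<lfloor>p\<rfloor>" "of_int \<lfloor>p\<rfloor> \<le> p" by linarith+
    hence "p / 2 \<le> real (nat \<lfloor>p\<rfloor>)" "real (nat \<lfloor>p\<rfloor>) \<le> p" using fl by linarith+
    moreover have "real c \<le> real c * p" using p by (simp add: mult_le_cancel_left1)
    ultimately show ?thesis unfolding p_def[symmetric] by (auto simp: of_nat_max algebra_simps)
  qed
  have "eventually (\<lambda>v. real v powr t / 2 \<le> real (max c (nat \<lfloor>real v powr t\<rfloor>)) \<and>
      real (max c (nat \<lfloor>real v powr t\<rfloor>)) \<le> (real c + 1) * real v powr t) at_top"
    using eventually_ge_at_top[of "1::nat"] by eventually_elim (rule bounds)
  thus ?thesis
    by (intro bigthetaI landau_o.bigI[of "real c + 1"] landau_omega.bigI[of "1 / 2"])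
       (auto elim!: eventually_mono)
qed

lemma powr_half_split:
  fixes x t :: real
  assumes x: "0 < x" and it: "real i * (1 - t) = real k / 2" and ik: "i \<le> k"
  shows "(x powr t) ^ i * x ^ (k - i) = x powr (real k / 2)"
    and "x ^ i / (x powr t) ^ i = x powr (real k / 2)"
proof -
  have xt: "(x powr t) ^ i = x powr (real i * t)" using x by (simp add: powr_power)
  have "(x powr t) ^ i * x ^ (k - i) = x powr (real i * t + real (k - i))"
    using x by (simp add: xt powr_add powr_realpow)
  also have "real i * t + real (k - i) = real k / 2" using it ik by (simp add: of_nat_diff algebra_simps)
  finally show "(x powr t) ^ i * x ^ (k - i) = x powr (real k / 2)" .
  have "x ^ i / (x powr t) ^ i = x powr (real i - real i * t)"
    using x by (simp add: xt powr_diff powr_realpow)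
  also have "real i - real i * t = real k / 2" using it by (simp add: algebra_simps)
  finally show "x ^ i / (x powr t) ^ i = x powr (real k / 2)" .
qed

context
  fixes k i :: nat and t :: real and m :: "nat \<Rightarrow> nat"
  assumes i: "1 \<le> i" "i < k" and t: "t < 1" and it: "real i * (1 - t) = real k / 2"
    and m: "(\<lambda>v. real (m v)) \<in> \<Theta>(\<lambda>v. real v powr t)" and km: "\<And>v. k + 3 \<le> m v"
begin

lemma clique_size_smallo: "(\<lambda>v. real (m v)) \<in> o(\<lambda>v. real v)"
proof -
  have "(\<lambda>v. real v powr t) \<in> o(\<lambda>v. real v)"
    using powr_smallo_iff[OF filterlim_real_sequentially, of t 1] t by simp
  thus ?thesis by (rule landau_o.big_small_trans[OF bigthetaD1[OF m]])
qed

lemma eventually_clique_size_le: "eventually (\<lambda>v. m v \<le> v \<and> k - i \<le> v - m v) at_top"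
proof -
  have "eventually (\<lambda>v. norm (real (m v)) \<le> 1 / 2 * norm (real v)) at_top"
    by (rule landau_o.smallD[OF clique_size_smallo]) simp
  hence "eventually (\<lambda>v. 2 * m v \<le> v \<and> 2 * k \<le> v) at_top"
    using eventually_ge_at_top[of "2 * k"] by eventually_elim simp
  thus ?thesis by eventually_elim auto
qed

lemma binomial_clique_size_bigtheta: "(\<lambda>v. real (m v choose i)) \<in> \<Theta>(\<lambda>v. (real v powr t) ^ i)"
proof -
  have "i \<le> m v" for v using km[of v] i by linarith
  thus ?thesis
    by (intro landau_theta.trans[OF bigtheta_binomial bigtheta_power[OF m]] always_eventually) auto
qed

lemma binomial_clique_complement_bigtheta:
  "(\<lambda>v. real ((v - m v) choose (k - i))) \<in> \<Theta>(\<lambda>v. real v ^ (k - i))"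
proof -
  have "(\<lambda>v. real v - real (m v)) \<in> \<Theta>(\<lambda>v. real v)"
    using landau_theta.diff_absorb2[OF clique_size_smallo] by (metis bigtheta_refl)
  hence "(\<lambda>v. real (v - m v)) \<in> \<Theta>(\<lambda>v. real v)"
    using eventually_clique_size_le by (subst landau_theta.in_cong) (auto elim!: eventually_mono)
  thus ?thesis using eventually_clique_size_le
    by (intro landau_theta.trans[OF bigtheta_binomial bigtheta_power]) (auto elim!: eventually_mono)
qed

lemma powr_half_bigtheta:
  shows "(\<lambda>v. (real v powr t) ^ i * real v ^ (k - i)) \<in> \<Theta>(\<lambda>v. real v powr (real k / 2))"
    and "(\<lambda>v. real v ^ i / (real v powr t) ^ i) \<in> \<Theta>(\<lambda>v. real v powr (real k / 2))"
proof -
  have "eventually (\<lambda>v. (real v powr t) ^ i * real v ^ (k - i) = real v powr (real k / 2) \<and>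
      real v ^ i / (real v powr t) ^ i = real v powr (real k / 2)) at_top"
    using eventually_gt_at_top[of "0::nat"] by eventually_elim (use powr_half_split[OF _ it] i in simp)
  thus "(\<lambda>v. (real v powr t) ^ i * real v ^ (k - i)) \<in> \<Theta>(\<lambda>v. real v powr (real k / 2))"
    and "(\<lambda>v. real v ^ i / (real v powr t) ^ i) \<in> \<Theta>(\<lambda>v. real v powr (real k / 2))"
    by (auto intro!: bigthetaI_cong elim!: eventually_mono)
qed

lemma sens_clique_prop_bigo:
  "(\<lambda>v. real (sens v k (clique_prop k i (m v) v))) \<in> O(\<lambda>v. real v powr (real k / 2))"
proof -
  have Cv: "(\<lambda>v. real (v choose r)) \<in> \<Theta>(\<lambda>v. real v ^ r)" for r
    by (intro bigtheta_binomial eventually_ge_at_top)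
  have "(\<lambda>v. real (m v choose i) * real (v choose (k - i))) \<in> \<Theta>(\<lambda>v. real v powr (real k / 2))"
    using landau_theta.mult[OF binomial_clique_size_bigtheta Cv] powr_half_bigtheta(1)
    by (rule landau_theta.trans)
  moreover have "(\<lambda>v. real (v choose i) / real (m v choose i)) \<in> \<Theta>(\<lambda>v. real v powr (real k / 2))"
  proof (rule landau_theta.trans[OF landau_theta.divide powr_half_bigtheta(2)])
    have "i \<le> m v" for v using km[of v] i by linarith
    thus "eventually (\<lambda>v. real (m v choose i) \<noteq> 0) at_top"
      by (intro always_eventually allI) (simp add: leD)
    show "eventually (\<lambda>v. (real v powr t) ^ i \<noteq> 0) at_top"
      using eventually_gt_at_top[of "0::nat"] by eventually_elim simp
  qed (fact Cv, fact bigtheta_sym[THEN iffD1, OF binomial_clique_size_bigtheta])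
  ultimately have sum: "(\<lambda>v. real (m v choose i) * real (v choose (k - i)) + real (v choose i) / real (m v choose i))
      \<in> O(\<lambda>v. real v powr (real k / 2))"
    by (intro sum_in_bigo(1) bigthetaD1)
  have "(\<lambda>v. real (sens v k (clique_prop k i (m v) v)))
      \<in> O(\<lambda>v. real (m v choose i) * real (v choose (k - i)) + real (v choose i) / real (m v choose i))"
    using sens_clique_prop_le[OF i km] by (intro landau_o.big_mono always_eventually) auto
  thus ?thesis using sum by (rule landau_o.big_trans)
qed

lemma sens_clique_prop_bigomega:
  "(\<lambda>v. real (sens v k (clique_prop k i (m v) v))) \<in> \<Omega>(\<lambda>v. real v powr (real k / 2))"
proof -
  have lower: "(\<lambda>v. real (m v choose i) * real ((v - m v) choose (k - i))) \<in> \<Theta>(\<lambda>v. real v powr (real k / 2))"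
    using landau_theta.mult[OF binomial_clique_size_bigtheta binomial_clique_complement_bigtheta]
      powr_half_bigtheta(1) by (rule landau_theta.trans)
  have "(\<lambda>v. real (sens v k (clique_prop k i (m v) v)))
      \<in> \<Omega>(\<lambda>v. real (m v choose i) * real ((v - m v) choose (k - i)))"
  proof (rule landau_omega.big_mono)
    show "eventually (\<lambda>v. norm (real (sens v k (clique_prop k i (m v) v)))
        \<ge> norm (real (m v choose i) * real ((v - m v) choose (k - i)))) at_top"
      using eventually_clique_size_le
    proof eventually_elim
      case (elim v)
      have "k < m v" using km[of v] by linarith
      from sens_clique_prop_ge[OF this _ i] elim show ?case by (simp flip: of_nat_mult)
    qed
  qed
  thus ?thesis by (rule landau_omega.big_trans[OF _ bigthetaD2[OF lower]])
qed

lemma sens_clique_prop_bigtheta: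
  "(\<lambda>v. real (sens v k (clique_prop k i (m v) v))) \<in> \<Theta>(\<lambda>v. real v powr (real k / 2))"
  using sens_clique_prop_bigo sens_clique_prop_bigomega by (rule bigthetaI)

end

lemma sqrt_binomial_bigtheta:
  "(\<lambda>v. sqrt (real (v choose k))) \<in> \<Theta>(\<lambda>v. real v powr (real k / 2))"
proof -
  have "(\<lambda>v. \<bar>real (v choose k)\<bar> powr (1 / 2)) \<in> \<Theta>(\<lambda>v. \<bar>real v ^ k\<bar> powr (1 / 2))"
    by (intro bigtheta_powr bigtheta_binomial eventually_ge_at_top)
  moreover have "eventually (\<lambda>v. \<bar>real v ^ k\<bar> powr (1 / 2) = real v powr (real k / 2)) at_top"
    using eventually_gt_at_top[of "0::nat"] by eventually_elim (simp add: powr_realpow[symmetric] powr_powr)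
  ultimately show ?thesis
    by (simp add: landau_theta.cong powr_half_sqrt)
qed

lemma exists_clique_prop_sens_bigtheta:
  assumes k: "2 \<le> k"
  shows "\<exists>(i::nat) (t::real) (m::nat \<Rightarrow> nat).
           1 \<le> i \<and> i < k \<and> 0 \<le> t \<and> t \<le> 1 \<and> real i * (1 - t) = real k / 2 \<and>
           (\<lambda>v. real (m v)) \<in> \<Theta>(\<lambda>v. real v powr t) \<and>
           (\<forall>v. hypergraph_property v k (clique_prop k i (m v) v)) \<and>
           (\<lambda>v. real (sens v k (clique_prop k i (m v) v))) \<in> \<Theta>(\<lambda>v. real v powr (real k / 2))"
proof -
  define i where "i = (k + 1) div 2" \<comment> \<open>for even k this makes t = 0 and m the constant k + 3\<close>
  define t where "t = 1 - real k / (2 * real i)"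
  define m where "m v = max (k + 3) (nat \<lfloor>real v powr t\<rfloor>)" for v
  have i: "1 \<le> i" "i < k" and ki: "real k \<le> 2 * real i" unfolding i_def using k by auto
  have t: "0 \<le> t" "t < 1" unfolding t_def using i ki k by (auto simp: field_simps)
  have it: "real i * (1 - t) = real k / 2" unfolding t_def using i by (simp add: field_simps)
  have m: "(\<lambda>v. real (m v)) \<in> \<Theta>(\<lambda>v. real v powr t)"
    unfolding m_def by (rule max_nat_floor_powr_bigtheta[OF t(1)])
  have km: "k + 3 \<le> m v" for v unfolding m_def by simp
  note sens_clique_prop_bigtheta[OF i t(2) it m km]
  thus ?thesis using i t it m hypergraph_property_clique_prop by (intro exI[of _ i] exI[of _ t] exI[of _ m]) auto
qed

theorem proposition3p5:
  shows "(\<forall>k::nat. k \<ge> 3 \<longrightarrow>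
            (\<exists>(i::nat) (t::real) (m::nat \<Rightarrow> nat).
               1 \<le> i \<and> i < k \<and> 0 \<le> t \<and> t \<le> 1 \<and> real i * (1 - t) = real k / 2 \<and>
               (\<lambda>v. real (m v)) \<in> \<Theta>(\<lambda>v. real v powr t) \<and>
               (\<forall>v. hypergraph_property v k (clique_prop k i (m v) v)) \<and>
               (\<lambda>v. real (sens v k (clique_prop k i (m v) v))) \<in> \<Theta>(\<lambda>v. real v powr (real k / 2))))
       \<and>
         (\<forall>k::nat. k \<ge> 2 \<longrightarrow>
            (\<exists>f :: nat \<Rightarrow> nat set set \<Rightarrow> bool.
               (\<forall>v. hypergraph_property v k (f v)) \<and>
               (\<lambda>v. real (sens v k (f v))) \<in> \<Theta>(\<lambda>v. real v powr (real k / 2)) \<and>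
               (\<lambda>v. real (sens v k (f v))) \<in> \<Theta>(\<lambda>v. sqrt (real (v choose k)))))"
proof (intro conjI allI impI)
  fix k :: nat assume "3 \<le> k"
  thus "\<exists>i t m. 1 \<le> i \<and> i < k \<and> 0 \<le> t \<and> t \<le> 1 \<and> real i * (1 - t) = real k / 2 \<and>
      (\<lambda>v. real (m v)) \<in> \<Theta>(\<lambda>v. real v powr t) \<and>
      (\<forall>v. hypergraph_property v k (clique_prop k i (m v) v)) \<and>
      (\<lambda>v. real (sens v k (clique_prop k i (m v) v))) \<in> \<Theta>(\<lambda>v. real v powr (real k / 2))"
    by (intro exists_clique_prop_sens_bigtheta) simp
next
  fix k :: nat assume "2 \<le> k"
  then obtain i t m where
    "\<forall>v. hypergraph_property v k (clique_prop k i (m v) v)" and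
    s: "(\<lambda>v. real (sens v k (clique_prop k i (m v) v))) \<in> \<Theta>(\<lambda>v. real v powr (real k / 2))"
    using exists_clique_prop_sens_bigtheta by blast
  moreover have "(\<lambda>v. real (sens v k (clique_prop k i (m v) v))) \<in> \<Theta>(\<lambda>v. sqrt (real (v choose k)))"
    using s bigtheta_sym[THEN iffD1, OF sqrt_binomial_bigtheta] by (rule landau_theta.trans)
  ultimately show "\<exists>f. (\<forall>v. hypergraph_property v k (f v)) \<and>
      (\<lambda>v. real (sens v k (f v))) \<in> \<Theta>(\<lambda>v. real v powr (real k / 2)) \<and>
      (\<lambda>v. real (sens v k (f v))) \<in> \<Theta>(\<lambda>v. sqrt (real (v choose k)))"
    by (intro exI[of _ "\<lambda>v. clique_prop k i (m v) v"]) simp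
qed

end
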